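(* For all $n\ge0$, \[\sum_{k=0}^n\binom{n}{k}P_{\mathcal{B}_k}(z)P_{\mathcal{B}_{n-k}}(z)=2^nP_{\mathcal{A}_{n+1}}(z).\]
   Context: $\mathcal{A}_m$ is the braid arrangement in $\mathbb{R}^m$ (hyperplanes $x_i=x_j$, $i<j$); $\mathcal{B}_m$ is the arrangement in $\mathbb{R}^m$ of hyperplanes $x_i=\pm x_j$ ($i<j$) and $x_i=0$, with $P_{\mathcal{B}_0}=1$. For an arrangement $\mathcal{A}$, $P_{\mathcal{A}}(z)=\sum_{\mathrm{X}}|\mu(\bot,\mathrm{X})|(z-1)^{\operatorname{codim}\mathrm{X}}$, summed over flats, $\mu$ the Möbius function of the lattice of flats under inclusion, $\bot$ its minimum. *)

theory Defs
  imports Complex_Main "HOL-Library.Function_Algebras" "HOL-Computational_Algebra.Polynomial"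
begin

text \<open>Points of R^m are modelled as functions nat => real vanishing at all
  coordinates i >= m (coordinates are indexed 0..m-1).\<close>

type_synonym pt = "nat \<Rightarrow> real"

definition ambient :: "nat \<Rightarrow> pt set" where
  "ambient m = {x. \<forall>i\<ge>m. x i = 0}"

definition fscale :: "real \<Rightarrow> pt \<Rightarrow> pt" where
  "fscale c x = (\<lambda>i. c * x i)"

definition codim :: "nat \<Rightarrow> pt set \<Rightarrow> nat" where
  "codim m X = m - vector_space.dim fscale X"

definition braid_arr :: "nat \<Rightarrow> pt set set" where
  "braid_arr m = {{x \<in> ambient m. x i = x j} | i j. i < j \<and> j < m}"

definition typeB_arr :: "nat \<Rightarrow> pt set set" where
  "typeB_arr m =
     {{x \<in> ambient m. x i = x j} | i j. i < j \<and> j < m} \<union>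
     {{x \<in> ambient m. x i = - x j} | i j. i < j \<and> j < m} \<union>
     {{x \<in> ambient m. x i = 0} | i. i < m}"

definition flats :: "nat \<Rightarrow> pt set set \<Rightarrow> pt set set" where
  "flats m A = {ambient m \<inter> \<Inter>S | S. S \<subseteq> A}"

definition flat_bot :: "nat \<Rightarrow> pt set set \<Rightarrow> pt set" where
  "flat_bot m A = ambient m \<inter> \<Inter>A"

definition mobius :: "'a set \<Rightarrow> ('a \<Rightarrow> 'a \<Rightarrow> bool) \<Rightarrow> 'a \<Rightarrow> 'a \<Rightarrow> int" where
  "mobius P le = (THE mu. \<forall>a b. mu a b =
      (if a \<in> P \<and> b \<in> P then
         (if a = b then 1
          else if le a b then - (\<Sum>c\<in>{c \<in> P. le a c \<and> le c b \<and> c \<noteq> b}. mu a c)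
          else 0)
       else 0))"

definition arr_poly :: "nat \<Rightarrow> pt set set \<Rightarrow> real poly" where
  "arr_poly m A = (\<Sum>X\<in>flats m A.
      smult (real_of_int \<bar>mobius (flats m A) (\<subseteq>) (flat_bot m A) X\<bar>) ([:-1, 1:] ^ codim m X))"

end

theory Submission
  imports Defs
begin

(* Every flat of A_m or B_m is the image of a coordinate map R^d -> R^m sending y to
   the point with x_i = +-y_p or x_i = 0 (the latter only in type B), the free
   parameters y_p being numbered in order of first appearance.  Recording the letter
   +-(p + 1) or 0 at each position identifies the flats of R^m with signed restricted
   growth strings of length m, and the dimension of a flat is its number d of blocks.
   The flats below a flat X of dimension d are the images of the flats of the same
   arrangement in R^d, so mu(bot, X) depends only on d and is forced by
   sum_{C <= X} mu(bot, C) = [X = bot]: it is (-1)^d (2d - 1)!! in type B and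
   (-1)^(d - 1) (d - 1)! in type A.  Building strings letter by letter (a letter either
   opens a new block or is one of 2d + 1, resp. d, old letters) gives
     P_B(m + 1) = z ((2m + 1) P_B(m) - 2 (z - 1) P_B'(m)),
     P_A(m + 1) = z (m P_A(m) - (z - 1) P_A'(m))   for m >= 1.
   Hence the binomial convolution S_n of P_B with itself obeys
     S_(n + 1) = z ((2n + 2) S_n - 2 (z - 1) S_n'),
   and so does 2^n P_A(n + 1); both are 1 at n = 0. *)

section \<open>Signed restricted growth strings\<close>

text \<open>The letter \<open>\<plusminus>(p + 1)\<close> at position \<open>i\<close> stands for \<open>x\<^sub>i = \<plusminus>y\<^sub>p\<close> and the
  letter \<open>0\<close> for \<open>x\<^sub>i = 0\<close>; a new block is opened by the letter one above the largest
  absolute value so far. The flag \<open>B\<close> selects type B; for the braid arrangement only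
  positive letters are admissible.\<close>

lemma nat_int_plus_1 [simp]: "nat (int k + 1) = Suc k" "nat (1 + int k) = Suc k"
  by arith+

definition nblocks :: "int list \<Rightarrow> nat" where
  "nblocks c = Max (insert 0 (set (map (\<lambda>a. nat \<bar>a\<bar>) c)))"

lemma nblocks_Nil [simp]: "nblocks [] = 0"
  by (simp add: nblocks_def)

lemma nblocks_snoc [simp]: "nblocks (c @ [a]) = max (nblocks c) (nat \<bar>a\<bar>)"
proof -
  have "insert 0 (set (map (\<lambda>a. nat \<bar>a\<bar>) (c @ [a])))
      = insert (nat \<bar>a\<bar>) (insert 0 (set (map (\<lambda>a. nat \<bar>a\<bar>) c)))"
    by auto
  then show ?thesis
    by (simp add: nblocks_def max.commute)
qed

lemma nblocks_ge: "a \<in> set c \<Longrightarrow> nat \<bar>a\<bar> \<le> nblocks c"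
  by (simp add: nblocks_def)

lemma nblocks_ge_nth: "i < length c \<Longrightarrow> nat \<bar>c ! i\<bar> \<le> nblocks c"
  by (rule nblocks_ge) simp

lemma nblocks_take_ge_nth: "i < k \<Longrightarrow> i < length h \<Longrightarrow> nat \<bar>h ! i\<bar> \<le> nblocks (take k h)"
  by (rule nblocks_ge) (auto simp: in_set_conv_nth intro: exI[of _ i])

lemma nblocks_eqI:
  "(\<forall>a\<in>set c. nat \<bar>a\<bar> \<le> n) \<Longrightarrow> n = 0 \<or> (\<exists>a\<in>set c. nat \<bar>a\<bar> = n) \<Longrightarrow> nblocks c = n"
  unfolding nblocks_def by (rule antisym) (auto intro!: Max_ge)

lemma nth_nonzero_less_nblocks: "i < length c \<Longrightarrow> c ! i \<noteq> 0 \<Longrightarrow> nat \<bar>c ! i\<bar> - 1 < nblocks c"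
  using nblocks_ge_nth[of i c] by linarith

definition admissible :: "bool \<Rightarrow> nat \<Rightarrow> int \<Rightarrow> bool" where
  "admissible B d a \<longleftrightarrow> a = int d + 1 \<or> (if B then \<bar>a\<bar> \<le> int d else 1 \<le> a \<and> a \<le> int d)"

inductive canonical :: "bool \<Rightarrow> int list \<Rightarrow> bool" for B where
  canonical_Nil: "canonical B []"
| canonical_snoc: "canonical B c \<Longrightarrow> admissible B (nblocks c) a \<Longrightarrow> canonical B (c @ [a])"

lemma canonical_snoc_iff: "canonical B (c @ [a]) \<longleftrightarrow> canonical B c \<and> admissible B (nblocks c) a"
  by (auto intro: canonical_snoc elim: canonical.cases)

lemma canonical_iff_nth:
  "canonical B c \<longleftrightarrow> (\<forall>i<length c. admissible B (nblocks (take i c)) (c ! i))"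
proof (induction c rule: rev_induct)
  case Nil
  then show ?case by (simp add: canonical_Nil)
next
  case (snoc a c)
  show ?case
    unfolding canonical_snoc_iff snoc.IH by (auto simp: nth_append less_Suc_eq)
qed

lemma canonical_take: "canonical B c \<Longrightarrow> canonical B (take k c)"
  by (auto simp: canonical_iff_nth)

lemma canonical_map_upt:
  assumes "\<And>k. k < n \<Longrightarrow> admissible B (nblocks (map g [0..<k])) (g k)"
  shows "canonical B (map g [0..<n])"
  using assms
proof (induction n)
  case 0
  show ?case by (simp add: canonical_Nil)
next
  case (Suc n)
  then show ?case by (simp add: canonical_snoc)
qed

lemma nblocks_le_length: "canonical B c \<Longrightarrow> nblocks c \<le> length c"
  by (induction rule: canonical.induct) (auto simp: admissible_def split: if_splits)

lemma canonical_typeA_ge_1: "canonical False c \<Longrightarrow> i < length c \<Longrightarrow> c ! i \<ge> 1"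
  by (induction rule: canonical.induct) (auto simp: admissible_def nth_append less_Suc_eq)

lemma canonical_block_occurs:
  "canonical B c \<Longrightarrow> 1 \<le> k \<Longrightarrow> k \<le> nblocks c \<Longrightarrow> \<exists>i<length c. c ! i = int k"
proof (induction rule: canonical.induct)
  case canonical_Nil
  then show ?case by simp
next
  case (canonical_snoc c a)
  show ?case
  proof (cases "k \<le> nblocks c")
    case True
    then obtain i where "i < length c" "c ! i = int k"
      using canonical_snoc by auto
    then show ?thesis by (intro exI[of _ i]) (auto simp: nth_append)
  next
    case False
    then have "a = int k"
      using canonical_snoc by (auto simp: admissible_def split: if_splits)
    then show ?thesis by (intro exI[of _ "length c"]) auto
  qed
qed

definition compose_str :: "int list \<Rightarrow> int list \<Rightarrow> int list" where
  "compose_str c h = map (\<lambda>a. sgn a * h ! (nat \<bar>a\<bar> - 1)) c"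

lemma compose_old_letter:
  assumes h: "canonical B h" and d: "d \<le> length h"
    and old: "if B then \<bar>a\<bar> \<le> int d else 1 \<le> a \<and> a \<le> int d"
  defines "b \<equiv> sgn a * h ! (nat \<bar>a\<bar> - 1)"
  shows "admissible B (nblocks (take d h)) b \<and> nat \<bar>b\<bar> \<le> nblocks (take d h)"
proof (cases "a = 0")
  case True
  then show ?thesis
    using old by (auto simp: b_def admissible_def split: if_splits)
next
  case False
  define p where "p = nat \<bar>a\<bar> - 1"
  have p: "p < d" "p < length h"
    using old False d by (auto simp: p_def split: if_splits)
  have abs_b: "nat \<bar>b\<bar> = nat \<bar>h ! p\<bar>"
    using False by (simp add: b_def p_def abs_mult)
  have hp: "nat \<bar>h ! p\<bar> \<le> nblocks (take d h)"
    using nblocks_take_ge_nth[OF p] .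
  show ?thesis
  proof (cases B)
    case True
    then show ?thesis
      using abs_b hp by (simp add: admissible_def) linarith
  next
    case False
    then have "b = h ! p"
      using old by (simp add: b_def p_def)
    moreover have "h ! p \<ge> 1"
      using canonical_typeA_ge_1[OF _ p(2)] h False by simp
    ultimately show ?thesis
      using abs_b hp False by (simp add: admissible_def) linarith
  qed
qed

lemma canonical_compose_str:
  assumes "canonical B c" "canonical B h" "nblocks c \<le> length h"
  shows "canonical B (compose_str c h) \<and> nblocks (compose_str c h) = nblocks (take (nblocks c) h)"
  using assms
proof (induction rule: canonical.induct)
  case canonical_Nil
  then show ?case by (simp add: compose_str_def canonical.canonical_Nil)
next
  case (canonical_snoc c a)
  have le: "nblocks c \<le> length h"
    using canonical_snoc.prems by simp
  with canonical_snoc have IH: "canonical B (compose_str c h)"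
    "nblocks (compose_str c h) = nblocks (take (nblocks c) h)" by auto
  define b where "b = sgn a * h ! (nat \<bar>a\<bar> - 1)"
  have snoc: "compose_str (c @ [a]) h = compose_str c h @ [b]"
    by (simp add: compose_str_def b_def)
  show ?case
  proof (cases "a = int (nblocks c) + 1")
    case True
    have lt: "nblocks c < length h"
      using canonical_snoc.prems True by simp
    have Suc_nblocks: "nat \<bar>a\<bar> = Suc (nblocks c)"
      using True by arith
    then have "b = h ! nblocks c"
      using True by (simp add: b_def)
    moreover have "admissible B (nblocks (take (nblocks c) h)) (h ! nblocks c)"
      using canonical_snoc.prems(1) lt by (simp add: canonical_iff_nth)
    moreover have "take (nblocks (c @ [a])) h = take (nblocks c) h @ [h ! nblocks c]"
      using Suc_nblocks lt by (simp add: take_Suc_conv_app_nth)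
    ultimately show ?thesis
      unfolding snoc using IH by (simp add: canonical_snoc_iff)
  next
    case False
    then have old: "if B then \<bar>a\<bar> \<le> int (nblocks c) else 1 \<le> a \<and> a \<le> int (nblocks c)"
      using canonical_snoc.hyps by (simp add: admissible_def)
    then have "nblocks (c @ [a]) = nblocks c"
      by (auto split: if_splits)
    then show ?thesis
      using compose_old_letter[OF canonical_snoc.prems(1) le old] IH
      unfolding snoc b_def by (auto simp: canonical_snoc_iff)
  qed
qed

definition hyp_eq :: "nat \<Rightarrow> nat \<Rightarrow> nat \<Rightarrow> pt set" where
  "hyp_eq m i j = {x \<in> ambient m. x i = x j}"

definition hyp_neg :: "nat \<Rightarrow> nat \<Rightarrow> nat \<Rightarrow> pt set" where
  "hyp_neg m i j = {x \<in> ambient m. x i = - x j}"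

definition hyp_zero :: "nat \<Rightarrow> nat \<Rightarrow> pt set" where
  "hyp_zero m i = {x \<in> ambient m. x i = 0}"

definition arr :: "bool \<Rightarrow> nat \<Rightarrow> pt set set" where
  "arr B m = (if B then typeB_arr m else braid_arr m)"

lemma mem_arr_iff:
  "H \<in> arr B m \<longleftrightarrow>
     (\<exists>i j. i < j \<and> j < m \<and> (H = hyp_eq m i j \<or> (B \<and> H = hyp_neg m i j))) \<or>
     (B \<and> (\<exists>i<m. H = hyp_zero m i))"
  unfolding arr_def typeB_arr_def braid_arr_def hyp_eq_def hyp_neg_def hyp_zero_def by auto

lemma arr_empty_iff: "arr B m = {} \<longleftrightarrow> (if B then m = 0 else m \<le> 1)"
proof -
  have "(\<forall>H. H \<notin> arr B m) \<longleftrightarrow> (if B then m = 0 else m \<le> 1)"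
  proof (cases "if B then m = 0 else m \<le> 1")
    case False
    then have "B \<and> 0 < m \<or> 1 < m"
      by (auto split: if_splits)
    then show ?thesis
      using False unfolding mem_arr_iff by auto
  qed (auto simp: mem_arr_iff split: if_splits)
  then show ?thesis
    by blast
qed

lemma finite_arr: "finite (arr B m)"
proof -
  have "arr B m \<subseteq> case_prod (hyp_eq m) ` ({..<m} \<times> {..<m}) \<union>
                  case_prod (hyp_neg m) ` ({..<m} \<times> {..<m}) \<union> hyp_zero m ` {..<m}"
    unfolding mem_arr_iff by (auto simp: subset_iff mem_arr_iff)
  then show ?thesis
    by (rule finite_subset) auto
qed

lemma signed_hyp_in_arr:
  assumes "i \<noteq> j" "i < m" "j < m" "s = 1 \<or> (B \<and> s = -1)"
  shows "{x \<in> ambient m. x i = s * x j} \<in> arr B m"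
proof -
  have "{x \<in> ambient m. x i = 1 * x j} = hyp_eq m (min i j) (max i j)"
    "{x \<in> ambient m. x i = -1 * x j} = hyp_neg m (min i j) (max i j)"
    unfolding hyp_eq_def hyp_neg_def by (auto simp: min_def max_def)
  moreover have "min i j < max i j" "max i j < m"
    using assms by auto
  ultimately show ?thesis
    using assms unfolding mem_arr_iff by blast
qed

lemma hyp_zero_in_arr: "B \<Longrightarrow> i < m \<Longrightarrow> hyp_zero m i \<in> arr B m"
  unfolding mem_arr_iff by blast

lemma signed_relation_in_arr:
  assumes "p < d" "q < d" "s = 1 \<or> (B \<and> s = -1)"
  shows "{y \<in> ambient d. y p = s * y q} \<in> insert (ambient d) (arr B d)"
proof (cases "p = q")
  case True
  show ?thesis
  proof (cases "s = 1")
    case False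
    then have "{y \<in> ambient d. y p = s * y q} = hyp_zero d p"
      using True assms(3) by (auto simp: hyp_zero_def)
    then show ?thesis
      using False assms hyp_zero_in_arr by auto
  qed (use True in simp)
next
  case False
  then show ?thesis
    using signed_hyp_in_arr[OF False assms] by simp
qed

lemma coord_relation_in_arr:
  fixes u v :: real
  assumes u: "u \<in> {-1, 0, 1}" and v: "v \<in> {-1, 0, 1}"
    and p: "u \<noteq> 0 \<Longrightarrow> p < d" and q: "v \<noteq> 0 \<Longrightarrow> q < d"
    and typeA: "\<not> B \<Longrightarrow> u = 1 \<and> v = 1"
  shows "{y \<in> ambient d. u * y p = v * y q} \<in> insert (ambient d) (arr B d)"
proof -
  consider "u = 0" "v = 0" | "u = 0" "v \<noteq> 0" | "u \<noteq> 0" "v = 0" | "u \<noteq> 0" "v \<noteq> 0"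
    by blast
  then show ?thesis
  proof cases
    case 2
    then have "{y \<in> ambient d. u * y p = v * y q} = hyp_zero d q"
      by (auto simp: hyp_zero_def)
    moreover have B
      using 2 typeA by auto
    ultimately show ?thesis
      using 2 q hyp_zero_in_arr by simp
  next
    case 3
    then have "{y \<in> ambient d. u * y p = v * y q} = hyp_zero d p"
      by (auto simp: hyp_zero_def)
    moreover have B
      using 3 typeA by auto
    ultimately show ?thesis
      using 3 p hyp_zero_in_arr by simp
  next
    case 4
    then have "u * u = 1" "v * v = 1"
      using u v by auto
    then have "u * y p = v * y q \<longleftrightarrow> y p = (u * v) * y q" for y :: pt
      by (metis mult.assoc mult_1 mult.commute)
    moreover have "u * v = 1 \<or> (B \<and> u * v = -1)"
      using u v 4 typeA by (cases B) auto
    ultimately show ?thesis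
      using signed_relation_in_arr[OF p q] 4 by simp
  qed simp
qed

section \<open>The flat of a string\<close>

definition str_map :: "int list \<Rightarrow> pt \<Rightarrow> pt" where
  "str_map c y = (\<lambda>i. if i < length c then of_int (sgn (c ! i)) * y (nat \<bar>c ! i\<bar> - 1) else 0)"

definition str_flat :: "int list \<Rightarrow> pt set" where
  "str_flat c = str_map c ` ambient (nblocks c)"

lemma str_map_nth: "i < length c \<Longrightarrow> str_map c y i = of_int (sgn (c ! i)) * y (nat \<bar>c ! i\<bar> - 1)"
  by (simp add: str_map_def)

lemma str_map_in_ambient: "str_map c y \<in> ambient (length c)"
  by (simp add: str_map_def ambient_def)

lemma str_flat_subset_ambient: "str_flat c \<subseteq> ambient (length c)"
  using str_map_in_ambient by (auto simp: str_flat_def)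

lemma str_map_compose:
  assumes "nblocks c \<le> length h"
  shows "str_map c (str_map h y) = str_map (compose_str c h) y"
proof
  fix i
  show "str_map c (str_map h y) i = str_map (compose_str c h) y i"
  proof (cases "i < length c \<and> c ! i \<noteq> 0")
    case True
    then have "nat \<bar>c ! i\<bar> - 1 < length h"
      using nth_nonzero_less_nblocks[of i c] assms by auto
    then show ?thesis
      using True by (auto simp: str_map_def compose_str_def sgn_mult abs_mult)
  next
    case False
    then show ?thesis
      by (auto simp: str_map_def compose_str_def)
  qed
qed

definition id_str :: "nat \<Rightarrow> int list" where
  "id_str d = map (\<lambda>k. int k + 1) [0..<d]"

lemma nblocks_id_str: "nblocks (id_str d) = d"
proof (rule nblocks_eqI)
  show "d = 0 \<or> (\<exists>a\<in>set (id_str d). nat \<bar>a\<bar> = d)"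
    by (cases d) (auto simp: id_str_def intro!: bexI[of _ "int d"])
qed (auto simp: id_str_def)

lemma id_str_props: "canonical B (id_str d)" "length (id_str d) = d" "str_flat (id_str d) = ambient d"
proof -
  show "canonical B (id_str d)"
    unfolding id_str_def
    by (rule canonical_map_upt) (simp add: nblocks_id_str[unfolded id_str_def] admissible_def)
  show "length (id_str d) = d"
    by (simp add: id_str_def)
  have "y \<in> ambient d \<Longrightarrow> str_map (id_str d) y = y" for y
    by (auto simp: str_map_def id_str_def ambient_def fun_eq_iff nat_add_distrib)
  then show "str_flat (id_str d) = ambient d"
    unfolding str_flat_def nblocks_id_str by force
qed

definition hyp_letter :: "nat \<Rightarrow> int \<Rightarrow> nat \<Rightarrow> int" where
  "hyp_letter b v k = (if k < b then int k + 1 else if k = b then v else int k)"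

definition hyp_str :: "nat \<Rightarrow> nat \<Rightarrow> int \<Rightarrow> int list" where
  "hyp_str d b v = map (hyp_letter b v) [0..<d]"

lemma nblocks_hyp_str_prefix:
  assumes "\<bar>v\<bar> \<le> int b"
  shows "nblocks (map (hyp_letter b v) [0..<k]) = (if k \<le> b then k else k - 1)"
proof (rule nblocks_eqI)
  let ?n = "if k \<le> b then k else k - 1"
  show "\<forall>a\<in>set (map (hyp_letter b v) [0..<k]). nat \<bar>a\<bar> \<le> ?n"
    using assms by (auto simp: hyp_letter_def)
  have "\<exists>j<k. nat \<bar>hyp_letter b v j\<bar> = ?n" if "?n \<noteq> 0"
  proof (cases "?n \<le> b")
    case True
    then show ?thesis
      using that by (intro exI[of _ "?n - 1"]) (auto simp: hyp_letter_def)
  next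
    case False
    then show ?thesis
      using that by (intro exI[of _ ?n]) (auto simp: hyp_letter_def)
  qed
  then show "?n = 0 \<or> (\<exists>a\<in>set (map (hyp_letter b v) [0..<k]). nat \<bar>a\<bar> = ?n)"
    by force
qed

lemma str_map_hyp_str:
  "str_map (hyp_str d b v) y i =
     (if i < d then (if i < b then y i else if i = b then of_int (sgn v) * y (nat \<bar>v\<bar> - 1) else y (i - 1))
      else 0)"
  by (auto simp: str_map_def hyp_str_def hyp_letter_def nat_diff_distrib nat_add_distrib)

lemma length_hyp_str [simp]: "length (hyp_str d b v) = d"
  by (simp add: hyp_str_def)

lemma nblocks_hyp_str: "b < d \<Longrightarrow> \<bar>v\<bar> \<le> int b \<Longrightarrow> nblocks (hyp_str d b v) = d - 1"
  unfolding hyp_str_def using nblocks_hyp_str_prefix[of v b d] by simp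

lemma canonical_hyp_str:
  assumes "\<bar>v\<bar> \<le> int b" "\<not> B \<Longrightarrow> v \<ge> 1"
  shows "canonical B (hyp_str d b v)"
  unfolding hyp_str_def
  by (rule canonical_map_upt) (use assms in \<open>auto simp: nblocks_hyp_str_prefix admissible_def hyp_letter_def\<close>)

lemma str_map_hyp_str_delete:
  assumes b: "b < d" and v: "\<bar>v\<bar> \<le> int b"
    and x: "x \<in> ambient d" "x b = of_int (sgn v) * x (nat \<bar>v\<bar> - 1)"
  shows "str_map (hyp_str d b v) (\<lambda>k. if k < b then x k else if k < d - 1 then x (k + 1) else 0) = x"
    (is "str_map _ ?y = x")
proof
  fix i
  consider "i < b" | "i = b" | "b < i" "i < d" | "d \<le> i"
    by linarith
  then show "str_map (hyp_str d b v) ?y i = x i"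
  proof cases
    case 2
    moreover have "v \<noteq> 0 \<Longrightarrow> nat \<bar>v\<bar> - 1 < b"
      using v by linarith
    ultimately show ?thesis
      using x b by (cases "v = 0") (simp_all add: str_map_hyp_str)
  next
    case 3
    then have "\<not> i - 1 < b" "i - 1 < d - 1" "i - 1 + 1 = i"
      by auto
    then show ?thesis
      using 3 by (simp add: str_map_hyp_str)
  next
    case 4
    then show ?thesis
      using x by (simp add: str_map_hyp_str ambient_def)
  qed (use b in \<open>simp add: str_map_hyp_str\<close>)
qed

lemma str_flat_hyp_str:
  assumes b: "b < d" and v: "\<bar>v\<bar> \<le> int b"
  shows "str_flat (hyp_str d b v) = {x \<in> ambient d. x b = of_int (sgn v) * x (nat \<bar>v\<bar> - 1)}"
proof (intro equalityI subsetI)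
  fix x assume "x \<in> str_flat (hyp_str d b v)"
  then obtain y where x: "x = str_map (hyp_str d b v) y"
    unfolding str_flat_def by auto
  have "x b = of_int (sgn v) * y (nat \<bar>v\<bar> - 1)"
    using b by (simp add: x str_map_hyp_str)
  moreover have "v \<noteq> 0 \<Longrightarrow> x (nat \<bar>v\<bar> - 1) = y (nat \<bar>v\<bar> - 1)"
    using b v by (simp add: x str_map_hyp_str)
  moreover have "x \<in> ambient d"
    using str_map_in_ambient[of "hyp_str d b v" y] by (simp add: x hyp_str_def)
  ultimately show "x \<in> {x \<in> ambient d. x b = of_int (sgn v) * x (nat \<bar>v\<bar> - 1)}"
    by (cases "v = 0") simp_all
next
  fix x assume "x \<in> {x \<in> ambient d. x b = of_int (sgn v) * x (nat \<bar>v\<bar> - 1)}"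
  then have "x = str_map (hyp_str d b v) (\<lambda>k. if k < b then x k else if k < d - 1 then x (k + 1) else 0)"
    using str_map_hyp_str_delete[OF b v] by simp
  moreover have "(\<lambda>k. if k < b then x k else if k < d - 1 then x (k + 1) else 0) \<in> ambient (nblocks (hyp_str d b v))"
    using b by (auto simp: ambient_def nblocks_hyp_str[OF b v])
  ultimately show "x \<in> str_flat (hyp_str d b v)"
    unfolding str_flat_def by (rule image_eqI)
qed

lemma hyperplane_is_str_flat:
  assumes "H \<in> arr B d"
  shows "\<exists>h. canonical B h \<and> length h = d \<and> nblocks h = d - 1 \<and> str_flat h = H"
proof -
  have hyp: "\<exists>h. canonical B h \<and> length h = d \<and> nblocks h = d - 1 \<and> str_flat h = H"
    if "b < d" "\<bar>v\<bar> \<le> int b" "\<not> B \<Longrightarrow> v \<ge> 1"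
      and "{x \<in> ambient d. x b = of_int (sgn v) * x (nat \<bar>v\<bar> - 1)} = H" for b v
    using canonical_hyp_str[OF that(2,3)] nblocks_hyp_str[OF that(1,2)] str_flat_hyp_str[OF that(1,2)] that(4)
    by (intro exI[of _ "hyp_str d b v"]) simp
  from assms[unfolded mem_arr_iff] show ?thesis
  proof (elim disjE exE conjE)
    fix a b assume "a < b" "b < d" "H = hyp_eq d a b"
    moreover have "nat \<bar>int a + 1\<bar> - 1 = a"
      by arith
    ultimately show ?thesis
      by (intro hyp[of b "int a + 1"]) (auto simp: hyp_eq_def)
  next
    fix a b assume "a < b" "b < d" "B" "H = hyp_neg d a b"
    moreover have "nat \<bar>- int a - 1\<bar> - 1 = a"
      by arith
    ultimately show ?thesis
      by (intro hyp[of b "- int a - 1"]) (auto simp: hyp_neg_def)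
  next
    fix a assume "B" "a < d" "H = hyp_zero d a"
    then show ?thesis
      by (intro hyp[of a 0]) (auto simp: hyp_zero_def)
  qed
qed

section \<open>Dimension\<close>

lemma (in vector_space_pair) dim_image_eq_inj_on:
  assumes f: "Vector_Spaces.linear s1 s2 f" and inj: "inj_on f (vs1.span S)"
  shows "vs2.dim (f ` S) = vs1.dim S"
proof -
  obtain B where B: "B \<subseteq> S" "vs1.independent B" "S \<subseteq> vs1.span B" "card B = vs1.dim S"
    by (rule vs1.basis_exists)
  have span: "vs1.span S = vs1.span B"
    using B vs1.span_mono[of B S] vs1.span_mono[of S "vs1.span B"] vs1.span_span[of B] by auto
  have "vs2.independent (f ` B)"
    by (rule linear_independent_injective_image[OF f]) (use B inj span in auto)
  moreover have "vs2.span (f ` B) = vs2.span (f ` S)"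
    by (simp add: linear_span_image[OF f] span)
  ultimately have "vs2.dim (f ` S) = card (f ` B)"
    using vs2.dim_eq_card by blast
  also have "\<dots> = card B"
    using B inj vs1.span_superset by (intro card_image inj_on_subset[OF inj]) auto
  finally show ?thesis
    using B by simp
qed

interpretation pt: vector_space fscale
  by unfold_locales (auto simp: fscale_def fun_eq_iff algebra_simps)

interpretation pt_pair: vector_space_pair fscale fscale ..

lemma sum_fun_apply: "(\<Sum>a\<in>A. f a) x = (\<Sum>a\<in>A. f a x)"
  by (induction A rule: infinite_finite_induct) auto

lemma subspace_ambient: "pt.subspace (ambient d)"
  by (auto simp: pt.subspace_def ambient_def fscale_def)

lemma linear_str_map: "Vector_Spaces.linear fscale fscale (str_map c)"
  by (auto simp: linear_iff_module_hom module_hom_iff str_map_def fun_eq_iff algebra_simps fscale_def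
      pt.module_axioms)

definition unit_pt :: "nat \<Rightarrow> pt" where
  "unit_pt k = (\<lambda>i. if i = k then 1 else 0)"

lemma unit_pt_in_ambient: "k < d \<Longrightarrow> unit_pt k \<in> ambient d"
  by (simp add: unit_pt_def ambient_def)

lemma independent_unit_pts: "pt.independent (unit_pt ` K)"
  unfolding pt.independent_explicit_module
proof (intro allI impI)
  fix t u v assume t: "finite t" "t \<subseteq> unit_pt ` K" and zero: "(\<Sum>w\<in>t. fscale (u w) w) = 0"
    and v: "v \<in> t"
  then obtain k where k: "v = unit_pt k"
    by auto
  have "0 = (\<Sum>w\<in>t. u w * w k)"
    using fun_cong[OF zero, of k] t by (simp add: sum_fun_apply fscale_def)
  also have "\<dots> = u v * v k"
  proof (rule sum.remove[OF t(1) v, THEN trans])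
    have "u w * w k = 0" if w: "w \<in> t - {v}" for w
    proof -
      obtain k' where "w = unit_pt k'"
        using w t by auto
      then show ?thesis
        using w k by (auto simp: unit_pt_def)
    qed
    then show "u v * v k + (\<Sum>w\<in>t - {v}. u w * w k) = u v * v k"
      by (simp add: sum.neutral)
  qed
  finally show "u v = 0"
    by (simp add: k unit_pt_def)
qed

lemma dim_ambient: "pt.dim (ambient d) = d"
proof (rule pt.dim_unique)
  show "unit_pt ` {..<d} \<subseteq> ambient d"
    by (auto simp: unit_pt_in_ambient)
  show "ambient d \<subseteq> pt.span (unit_pt ` {..<d})"
  proof
    fix x assume x: "x \<in> ambient d"
    have "x i = (\<Sum>k<d. fscale (x k) (unit_pt k)) i" for i
      using x by (simp add: sum_fun_apply fscale_def unit_pt_def ambient_def if_distrib cong: if_cong)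
    then have "x = (\<Sum>k<d. fscale (x k) (unit_pt k))" ..
    also have "\<dots> \<in> pt.span (unit_pt ` {..<d})"
      by (intro pt.span_sum pt.span_scale pt.span_base) auto
    finally show "x \<in> pt.span (unit_pt ` {..<d})" .
  qed
  show "pt.independent (unit_pt ` {..<d})"
    by (rule independent_unit_pts)
  show "card (unit_pt ` {..<d}) = d"
    by (subst card_image) (auto simp: inj_on_def unit_pt_def fun_eq_iff split: if_splits)
qed

lemma inj_on_str_map:
  assumes "canonical B c"
  shows "inj_on (str_map c) (ambient (nblocks c))"
proof
  fix y y' assume y: "y \<in> ambient (nblocks c)" and y': "y' \<in> ambient (nblocks c)"
    and eq: "str_map c y = str_map c y'"
  show "y = y'"
  proof
    fix k
    show "y k = y' k"
    proof (cases "k < nblocks c")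
      case True
      then obtain i where i: "i < length c" "c ! i = int (k + 1)"
        using canonical_block_occurs[OF assms, of "k + 1"] by auto
      then have "str_map c y i = y k" "str_map c y' i = y' k"
        by (auto simp: str_map_nth)
      then show ?thesis
        using eq by metis
    next
      case False
      then show ?thesis
        using y y' by (simp add: ambient_def)
    qed
  qed
qed

lemma dim_str_map_image:
  assumes "canonical B c" "S \<subseteq> ambient (nblocks c)"
  shows "pt.dim (str_map c ` S) = pt.dim S"
proof (rule pt_pair.dim_image_eq_inj_on[OF linear_str_map])
  have "pt.span S \<subseteq> ambient (nblocks c)"
    using pt.span_mono[OF assms(2)] subspace_ambient pt.span_eq_iff by blast
  then show "inj_on (str_map c) (pt.span S)"
    using inj_on_str_map[OF assms(1)] inj_on_subset by blast
qed

lemma dim_str_flat: "canonical B c \<Longrightarrow> pt.dim (str_flat c) = nblocks c"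
  unfolding str_flat_def using dim_str_map_image[of B c "ambient (nblocks c)"] dim_ambient by simp

section \<open>The lattice of flats\<close>

abbreviation arr_flats :: "bool \<Rightarrow> nat \<Rightarrow> pt set set" where
  "arr_flats B m \<equiv> flats m (arr B m)"

definition canon_strs :: "bool \<Rightarrow> nat \<Rightarrow> int list set" where
  "canon_strs B m = {c. canonical B c \<and> length c = m}"

definition pullback :: "int list \<Rightarrow> pt set \<Rightarrow> pt set" where
  "pullback c H = {y \<in> ambient (nblocks c). str_map c y \<in> H}"

lemma str_map_image_pullbacks:
  "str_map c ` {y \<in> ambient (nblocks c). \<forall>H\<in>S. str_map c y \<in> H} = str_flat c \<inter> \<Inter>S"
  unfolding str_flat_def by auto

lemma of_int_sgn_cases: "(of_int (sgn (a::int)) :: real) \<in> {-1, 0, 1}"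
  by (cases "a > 0"; cases "a = 0") auto

lemma pullback_hyperplane:
  assumes c: "canonical B c" and H: "H \<in> arr B (length c)"
  shows "pullback c H \<in> insert (ambient (nblocks c)) (arr B (nblocks c))"
proof -
  let ?d = "nblocks c"
  let ?s = "\<lambda>i. (of_int (sgn (c ! i)) :: real)"
  let ?p = "\<lambda>i. nat \<bar>c ! i\<bar> - 1"
  have typeA: "\<not> B \<Longrightarrow> ?s i = 1" if "i < length c" for i
    using canonical_typeA_ge_1[OF _ that] c by (cases B) auto
  have p: "?s i \<noteq> 0 \<Longrightarrow> ?p i < ?d" if "i < length c" for i
    using nth_nonzero_less_nblocks[OF that] by (cases "c ! i = 0") auto
  from H[unfolded mem_arr_iff] show ?thesis
  proof (elim disjE exE conjE)
    fix i j assume ij: "i < j" "j < length c" and H: "H = hyp_eq (length c) i j"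
    have "pullback c H = {y \<in> ambient ?d. ?s i * y (?p i) = ?s j * y (?p j)}"
      unfolding pullback_def H hyp_eq_def using ij str_map_in_ambient by (auto simp: str_map_nth)
    also have "\<dots> \<in> insert (ambient ?d) (arr B ?d)"
      by (rule coord_relation_in_arr[OF of_int_sgn_cases of_int_sgn_cases]) (use ij p typeA in auto)
    finally show ?thesis .
  next
    fix i j assume ij: "i < j" "j < length c" and H: "B" "H = hyp_neg (length c) i j"
    have "pullback c H = {y \<in> ambient ?d. ?s i * y (?p i) = (- ?s j) * y (?p j)}"
      unfolding pullback_def H hyp_neg_def using ij str_map_in_ambient by (auto simp: str_map_nth)
    also have "\<dots> \<in> insert (ambient ?d) (arr B ?d)"
      by (rule coord_relation_in_arr[OF of_int_sgn_cases])
        (use ij p H of_int_sgn_cases[of "c ! j"] in auto)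
    finally show ?thesis .
  next
    fix i assume i: "B" "i < length c" "H = hyp_zero (length c) i"
    have "pullback c H = {y \<in> ambient ?d. ?s i * y (?p i) = 0 * y 0}"
      unfolding pullback_def i hyp_zero_def using i str_map_in_ambient by (auto simp: str_map_nth)
    also have "\<dots> \<in> insert (ambient ?d) (arr B ?d)"
      by (rule coord_relation_in_arr[OF of_int_sgn_cases]) (use i p in auto)
    finally show ?thesis .
  qed
qed

lemma hyperplane_eq_pullback:
  assumes c: "canonical B c" and H': "H' \<in> arr B (nblocks c)"
  shows "\<exists>H \<in> arr B (length c). H' = pullback c H"
proof -
  let ?d = "nblocks c"
  have occurs: "\<exists>i<length c. c ! i = int (a + 1)" if "a < ?d" for a
    using canonical_block_occurs[OF c, of "a + 1"] that by auto
  have signed: "\<exists>H \<in> arr B (length c). {y \<in> ambient ?d. y a = of_int s * y b} = pullback c H"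
    if ab: "a < b" "b < ?d" and s: "s = 1 \<or> (B \<and> s = -1)" for a b s
  proof -
    obtain i j where i: "i < length c" "c ! i = int (a + 1)" and j: "j < length c" "c ! j = int (b + 1)"
      using occurs[of a] occurs[of b] ab by auto
    have "i \<noteq> j"
      using i j ab by auto
    then have "{x \<in> ambient (length c). x i = of_int s * x j} \<in> arr B (length c)"
      using signed_hyp_in_arr[of i j "length c" "of_int s" B] i j s by auto
    moreover have "{y \<in> ambient ?d. y a = of_int s * y b}
        = pullback c {x \<in> ambient (length c). x i = of_int s * x j}"
      unfolding pullback_def using i j str_map_in_ambient by (auto simp: str_map_nth)
    ultimately show ?thesis
      by blast
  qed
  from H'[unfolded mem_arr_iff] show ?thesis
  proof (elim disjE exE conjE)
    fix a b assume "a < b" "b < ?d" "H' = hyp_eq ?d a b"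
    then show ?thesis
      using signed[of a b 1] by (simp add: hyp_eq_def)
  next
    fix a b assume "a < b" "b < ?d" "B" "H' = hyp_neg ?d a b"
    then show ?thesis
      using signed[of a b "-1"] by (simp add: hyp_neg_def)
  next
    fix a assume a: "B" "a < ?d" "H' = hyp_zero ?d a"
    obtain i where i: "i < length c" "c ! i = int (a + 1)"
      using occurs a(2) by blast
    have "H' = pullback c (hyp_zero (length c) i)"
      unfolding pullback_def a hyp_zero_def using i str_map_in_ambient by (auto simp: str_map_nth)
    then show ?thesis
      using hyp_zero_in_arr[of B i "length c"] a i by blast
  qed
qed

definition first_occ :: "int list \<Rightarrow> nat \<Rightarrow> nat" where
  "first_occ c k = (LEAST i. i < length c \<and> c ! i = int (k + 1))"

lemma nth_first_occ:
  assumes "canonical B c" "k < nblocks c"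
  shows "first_occ c k < length c" "c ! first_occ c k = int (k + 1)"
proof -
  have "\<exists>i. i < length c \<and> c ! i = int (k + 1)"
    using canonical_block_occurs[OF assms(1), of "k + 1"] assms(2) by auto
  from LeastI_ex[OF this] show "first_occ c k < length c" "c ! first_occ c k = int (k + 1)"
    unfolding first_occ_def by auto
qed

definition block_relation :: "int list \<Rightarrow> nat \<Rightarrow> pt set" where
  "block_relation c i = {x \<in> ambient (length c).
     x i = of_int (sgn (c ! i)) * x (first_occ c (nat \<bar>c ! i\<bar> - 1))}"

lemma str_flat_subset_block_relation:
  assumes "canonical B c" "i < length c"
  shows "str_flat c \<subseteq> block_relation c i"
proof
  fix x assume "x \<in> str_flat c"
  then obtain y where x: "x = str_map c y"
    unfolding str_flat_def by blast
  have "x i = of_int (sgn (c ! i)) * x (first_occ c (nat \<bar>c ! i\<bar> - 1))"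
  proof (cases "c ! i = 0")
    case False
    then have "nat \<bar>c ! i\<bar> - 1 < nblocks c"
      using nth_nonzero_less_nblocks assms(2) by blast
    then show ?thesis
      using nth_first_occ[OF assms(1)] assms(2) by (simp add: x str_map_nth)
  qed (simp add: x str_map_nth assms(2))
  then show "x \<in> block_relation c i"
    using str_map_in_ambient by (simp add: block_relation_def x)
qed

lemma block_relation_in_arr:
  assumes c: "canonical B c" and i: "i < length c"
  shows "block_relation c i \<in> insert (ambient (length c)) (arr B (length c))"
proof -
  have "sgn (c ! i) \<noteq> 0 \<Longrightarrow> first_occ c (nat \<bar>c ! i\<bar> - 1) < length c"
    using nth_first_occ(1)[OF c] nth_nonzero_less_nblocks[OF i] by (simp add: sgn_0_0)
  moreover have "\<not> B \<Longrightarrow> sgn (c ! i) = 1"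
    using canonical_typeA_ge_1[OF _ i] c by (cases B) auto
  ultimately show ?thesis
    using coord_relation_in_arr[of 1 "of_int (sgn (c ! i))" i "length c"] i of_int_sgn_cases
    unfolding block_relation_def by auto
qed

lemma str_flat_eq_Inter_hyperplanes:
  assumes c: "canonical B c"
  shows "str_flat c = ambient (length c) \<inter> \<Inter>{H \<in> arr B (length c). str_flat c \<subseteq> H}"
proof (intro equalityI subsetI)
  fix x assume x_in: "x \<in> ambient (length c) \<inter> \<Inter>{H \<in> arr B (length c). str_flat c \<subseteq> H}"
  then have x: "x \<in> block_relation c i" if "i < length c" for i
    using block_relation_in_arr[OF c that] str_flat_subset_block_relation[OF c that] by auto
  define y where "y k = (if k < nblocks c then x (first_occ c k) else 0)" for k
  have "str_map c y i = x i" for i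
  proof (cases "i < length c")
    case True
    then show ?thesis
      using x[OF True] nth_nonzero_less_nblocks[OF True]
      by (cases "c ! i = 0") (auto simp: str_map_nth y_def block_relation_def)
  next
    case False
    then show ?thesis
      using x_in by (simp add: str_map_def ambient_def)
  qed
  then have "x = str_map c y" by auto
  moreover have "y \<in> ambient (nblocks c)"
    by (simp add: y_def ambient_def)
  ultimately show "x \<in> str_flat c"
    unfolding str_flat_def by blast
qed (use str_flat_subset_ambient in auto)

lemma str_flat_in_arr_flats: "canonical B c \<Longrightarrow> str_flat c \<in> arr_flats B (length c)"
  unfolding flats_def using str_flat_eq_Inter_hyperplanes[of B c] by blast

lemma flats_below_str_flat:
  assumes c: "canonical B c"
  shows "{C \<in> arr_flats B (length c). C \<subseteq> str_flat c} = (\<lambda>C'. str_map c ` C') ` arr_flats B (nblocks c)"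
proof (intro equalityI subsetI)
  let ?m = "length c" and ?d = "nblocks c"
  fix C assume "C \<in> {C \<in> arr_flats B ?m. C \<subseteq> str_flat c}"
  then obtain S where S: "S \<subseteq> arr B ?m" "C = ambient ?m \<inter> \<Inter>S" and "C \<subseteq> str_flat c"
    unfolding flats_def by auto
  then have "C = str_flat c \<inter> \<Inter>S"
    using str_flat_subset_ambient[of c] by auto
  also have "\<dots> = str_map c ` (ambient ?d \<inter> \<Inter>(pullback c ` S - {ambient ?d}))"
    unfolding str_map_image_pullbacks[symmetric] pullback_def by (intro arg_cong[where f = "image _"]) auto
  finally have "C = str_map c ` (ambient ?d \<inter> \<Inter>(pullback c ` S - {ambient ?d}))" .
  moreover have "pullback c ` S - {ambient ?d} \<subseteq> arr B ?d"
    using pullback_hyperplane[OF c] S(1) by auto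
  ultimately show "C \<in> (\<lambda>C'. str_map c ` C') ` arr_flats B ?d"
    unfolding flats_def by blast
next
  let ?m = "length c" and ?d = "nblocks c"
  fix C assume "C \<in> (\<lambda>C'. str_map c ` C') ` arr_flats B ?d"
  then obtain T where T: "T \<subseteq> arr B ?d" "C = str_map c ` (ambient ?d \<inter> \<Inter>T)"
    unfolding flats_def by auto
  obtain lift where lift: "\<And>t. t \<in> T \<Longrightarrow> lift t \<in> arr B ?m \<and> t = pullback c (lift t)"
    using hyperplane_eq_pullback[OF c] T(1) by (metis subsetD)
  have "ambient ?d \<inter> \<Inter>T = {y \<in> ambient ?d. \<forall>H\<in>lift ` T. str_map c y \<in> H}"
    using lift unfolding pullback_def by blast
  then have C: "C = str_flat c \<inter> \<Inter>(lift ` T)"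
    by (simp only: T(2) str_map_image_pullbacks)
  obtain S0 where S0: "S0 \<subseteq> arr B ?m" "str_flat c = ambient ?m \<inter> \<Inter>S0"
    using str_flat_in_arr_flats[OF c] unfolding flats_def by auto
  have "C = ambient ?m \<inter> \<Inter>(S0 \<union> lift ` T)"
    unfolding C S0(2) by auto
  moreover have "S0 \<union> lift ` T \<subseteq> arr B ?m"
    using S0(1) lift by auto
  ultimately show "C \<in> {C \<in> arr_flats B ?m. C \<subseteq> str_flat c}"
    unfolding flats_def using C by blast
qed

lemma str_flat_Int_hyperplane:
  assumes c: "canonical B c" and H: "H \<in> arr B (length c)"
  shows "\<exists>c'. canonical B c' \<and> length c' = length c \<and> str_flat c \<inter> H = str_flat c'"
proof -
  have eq: "str_flat c \<inter> H = str_map c ` pullback c H"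
    using str_map_image_pullbacks[of c "{H}"] unfolding pullback_def by simp
  from pullback_hyperplane[OF c H] show ?thesis
  proof
    assume "pullback c H = ambient (nblocks c)"
    then show ?thesis
      using eq c by (auto simp: str_flat_def)
  next
    assume "pullback c H \<in> arr B (nblocks c)"
    then obtain h where h: "canonical B h" "length h = nblocks c" "nblocks h = nblocks c - 1"
      "str_flat h = pullback c H"
      using hyperplane_is_str_flat by blast
    have comp: "canonical B (compose_str c h)" "nblocks (compose_str c h) = nblocks h"
      using canonical_compose_str[OF c h(1)] h(2) by simp_all
    have "str_flat c \<inter> H = str_map c ` str_flat h"
      using eq h(4) by simp
    also have "\<dots> = str_flat (compose_str c h)"
      unfolding str_flat_def image_image comp(2) using str_map_compose[of c h] h(2) by simp
    finally show ?thesis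
      using comp(1) by (intro exI[of _ "compose_str c h"]) (simp add: compose_str_def)
  qed
qed

lemma arr_flats_eq_str_flats: "arr_flats B m = str_flat ` canon_strs B m"
proof
  show "str_flat ` canon_strs B m \<subseteq> arr_flats B m"
    using str_flat_in_arr_flats by (auto simp: canon_strs_def)
next
  have Inter: "\<exists>c. canonical B c \<and> length c = m \<and> ambient m \<inter> \<Inter>S = str_flat c"
    if "finite S" "S \<subseteq> arr B m" for S
    using that
  proof (induction S rule: finite_induct)
    case empty
    show ?case
      using id_str_props by (intro exI[of _ "id_str m"]) simp
  next
    case (insert H S)
    then obtain c where c: "canonical B c" "length c = m" "ambient m \<inter> \<Inter>S = str_flat c"
      by auto
    have "ambient m \<inter> \<Inter>(insert H S) = str_flat c \<inter> H"
      using c(3) by blast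
    then show ?case
      using str_flat_Int_hyperplane[OF c(1)] insert.prems c(2) by auto
  qed
  show "arr_flats B m \<subseteq> str_flat ` canon_strs B m"
  proof
    fix X assume "X \<in> arr_flats B m"
    then obtain S where S: "S \<subseteq> arr B m" "X = ambient m \<inter> \<Inter>S"
      unfolding flats_def by auto
    then have "finite S"
      using finite_arr finite_subset by blast
    with Inter S show "X \<in> str_flat ` canon_strs B m"
      by (force simp: canon_strs_def)
  qed
qed

lemma str_flat_zero_iff:
  assumes i: "i < length c"
  shows "(\<forall>x\<in>str_flat c. x i = 0) \<longleftrightarrow> c ! i = 0"
proof
  assume zero: "\<forall>x\<in>str_flat c. x i = 0"
  show "c ! i = 0"
  proof (rule ccontr)
    assume nz: "c ! i \<noteq> 0"
    have "str_map c (unit_pt (nat \<bar>c ! i\<bar> - 1)) \<in> str_flat c"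
      unfolding str_flat_def using unit_pt_in_ambient[OF nth_nonzero_less_nblocks[OF i nz]] by blast
    then show False
      using zero nz i by (force simp: str_map_nth unit_pt_def sgn_0_0)
  qed
qed (use i in \<open>auto simp: str_flat_def str_map_nth\<close>)

lemma str_flat_rel_iff:
  assumes i: "i < length c" and j: "j < length c" and nz: "c ! i \<noteq> 0" "c ! j \<noteq> 0"
    and s: "s = 1 \<or> s = -1"
  shows "(\<forall>x\<in>str_flat c. x i = of_int s * x j) \<longleftrightarrow> c ! i = s * c ! j"
proof
  assume "c ! i = s * c ! j"
  then have "nat \<bar>c ! i\<bar> = nat \<bar>c ! j\<bar>" "sgn (c ! i) = s * sgn (c ! j)"
    using s by (auto simp: abs_mult sgn_mult)
  then show "\<forall>x\<in>str_flat c. x i = of_int s * x j"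
    using i j by (auto simp: str_flat_def str_map_nth)
next
  assume rel: "\<forall>x\<in>str_flat c. x i = of_int s * x j"
  define p where "p = nat \<bar>c ! i\<bar> - 1"
  define q where "q = nat \<bar>c ! j\<bar> - 1"
  have "str_map c (unit_pt p) \<in> str_flat c"
    unfolding str_flat_def p_def using unit_pt_in_ambient[OF nth_nonzero_less_nblocks[OF i nz(1)]] by blast
  then have "str_map c (unit_pt p) i = of_int s * str_map c (unit_pt p) j"
    using rel by blast
  then have sgn_eq: "(of_int (sgn (c ! i)) :: real) = of_int s * of_int (sgn (c ! j)) * (if q = p then 1 else 0)"
    using i j by (simp add: str_map_nth unit_pt_def p_def q_def)
  then have "q = p"
    using nz(1) by (auto simp: sgn_0_0 split: if_splits)
  then have "\<bar>c ! i\<bar> = \<bar>c ! j\<bar>"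
    using nz unfolding p_def q_def by (simp add: eq_nat_nat_iff)
  moreover have "sgn (c ! i) = s * sgn (c ! j)"
    using sgn_eq \<open>q = p\<close> by (simp flip: of_int_mult)
  ultimately show "c ! i = s * c ! j"
    by (metis mult.assoc sgn_mult_abs)
qed

lemma str_flat_determines_old_letter:
  assumes c: "canonical B c" and c': "canonical B c'" and len: "length c = length c'"
    and eq: "str_flat c = str_flat c'" and i: "i < length c" and prefix: "take i c = take i c'"
    and old: "c ! i = 0 \<or> nat \<bar>c ! i\<bar> \<le> nblocks (take i c)"
  shows "c' ! i = c ! i"
proof -
  have i': "i < length c'"
    using i len by simp
  show ?thesis
  proof (cases "c ! i = 0")
    case True
    then show ?thesis
      using str_flat_zero_iff[OF i] str_flat_zero_iff[OF i'] eq by simp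
  next
    case False
    then have "\<exists>j<length (take i c). take i c ! j = int (nat \<bar>c ! i\<bar>)"
      using canonical_block_occurs[OF canonical_take[OF c, of i], of "nat \<bar>c ! i\<bar>"] old by auto
    then obtain j where j: "j < i" "c ! j = \<bar>c ! i\<bar>"
      by auto
    have c'j: "c' ! j = c ! j"
      using prefix j(1) by (metis nth_take)
    define s where "s = sgn (c ! i)"
    have s: "s = 1 \<or> s = -1"
      using False by (auto simp: s_def sgn_if)
    have ci: "c ! i = s * c ! j"
      using j(2) by (simp add: s_def sgn_mult_abs)
    have nzj: "c ! j \<noteq> 0"
      using j(2) False by simp
    have nzi': "c' ! i \<noteq> 0"
      using str_flat_zero_iff[OF i] str_flat_zero_iff[OF i'] eq False by simp
    have "\<forall>x\<in>str_flat c. x i = of_int s * x j"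
      using str_flat_rel_iff[OF i _ False nzj s] ci j(1) i by simp
    then have "c' ! i = s * c' ! j"
      using str_flat_rel_iff[OF i' _ nzi' _ s] eq c'j nzj j(1) i' by simp
    then show ?thesis
      using ci c'j by simp
  qed
qed

lemma admissible_cases:
  "admissible B d a \<Longrightarrow> a = int d + 1 \<or> a = 0 \<or> nat \<bar>a\<bar> \<le> d"
  unfolding admissible_def by (cases B) auto

lemma inj_on_str_flat: "inj_on str_flat (canon_strs B m)"
proof
  fix c c' assume "c \<in> canon_strs B m" "c' \<in> canon_strs B m" and eq: "str_flat c = str_flat c'"
  then have c: "canonical B c" "length c = m" and c': "canonical B c'" "length c' = m"
    by (auto simp: canon_strs_def)
  have "take i c = take i c'" if "i \<le> m" for i
    using that
  proof (induction i)
    case (Suc i)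
    then have prefix: "take i c = take i c'" and i: "i < m"
      by auto
    have adm: "admissible B (nblocks (take i c)) (c ! i)" "admissible B (nblocks (take i c)) (c' ! i)"
      using c c' i prefix by (auto simp: canonical_iff_nth)
    have "c ! i = c' ! i"
    proof (cases "c ! i = int (nblocks (take i c)) + 1 \<and> c' ! i = int (nblocks (take i c)) + 1")
      case False
      then show ?thesis
        using admissible_cases[OF adm(1)] admissible_cases[OF adm(2)] i c c' prefix eq
          str_flat_determines_old_letter[OF c(1) c'(1) _ eq _ prefix]
          str_flat_determines_old_letter[OF c'(1) c(1) _ eq[symmetric] _ prefix[symmetric]]
        by (metis (no_types, lifting))
    qed simp
    then show ?case
      using prefix i c c' by (simp add: take_Suc_conv_app_nth)
  qed simp
  then show "c = c'"
    using c c' by (metis order.refl take_all)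
qed

section \<open>Moebius functions of finite posets\<close>

definition mobius_step :: "'a::order set \<Rightarrow> ('a \<Rightarrow> 'a \<Rightarrow> int) \<Rightarrow> 'a \<Rightarrow> 'a \<Rightarrow> int" where
  "mobius_step P mu a b =
    (if a \<in> P \<and> b \<in> P then
       (if a = b then 1
        else if a \<le> b then - (\<Sum>c\<in>{c \<in> P. a \<le> c \<and> c \<le> b \<and> c \<noteq> b}. mu a c)
        else 0)
     else 0)"

definition height_in :: "'a::order set \<Rightarrow> 'a \<Rightarrow> nat" where
  "height_in P b = card {c \<in> P. c < b}"

lemma height_in_less:
  assumes "finite P" "c \<in> P" "c < b"
  shows "height_in P c < height_in P b"
  unfolding height_in_def using assms by (intro psubset_card_mono) auto

lemma height_in_le_card: "finite P \<Longrightarrow> height_in P b \<le> card P"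
  unfolding height_in_def by (intro card_mono) auto

lemma mobius_step_cong:
  "(\<And>c. c \<in> P \<Longrightarrow> c < b \<Longrightarrow> mu a c = mu' a c) \<Longrightarrow> mobius_step P mu a b = mobius_step P mu' a b"
  unfolding mobius_step_def by (auto simp: order.strict_iff_order intro!: sum.cong)

text \<open>Iterating the recursion from \<open>0\<close> stabilises at \<open>b\<close> after \<open>height_in P b + 1\<close>
  rounds; this provides the solution that the definite description in \<open>mobius\<close> needs.\<close>

lemma mobius_step_iterate_stable:
  assumes "finite P"
  shows "height_in P b < n \<Longrightarrow> height_in P b < n' \<Longrightarrow>
    (mobius_step P ^^ n) (\<lambda>_ _. 0) a b = (mobius_step P ^^ n') (\<lambda>_ _. 0) a b"
proof (induction n arbitrary: n' b)
  case (Suc k)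
  then obtain k' where k': "n' = Suc k'"
    by (cases n') auto
  have "(mobius_step P ^^ k) (\<lambda>_ _. 0) a c = (mobius_step P ^^ k') (\<lambda>_ _. 0) a c"
    if "c \<in> P" "c < b" for c
    using height_in_less[OF assms that] Suc k' by (intro Suc.IH) auto
  then show ?case
    unfolding k' funpow.simps comp_apply by (rule mobius_step_cong)
qed simp

lemma mobius_eq_mobius_step:
  fixes P :: "'a::order set"
  assumes P: "finite P"
  shows "mobius P (\<le>) a b = mobius_step P (mobius P (\<le>)) a b"
proof -
  define M where "M = (mobius_step P ^^ Suc (card P)) (\<lambda>_ _. 0)"
  have M: "M a b = mobius_step P M a b" for a b
  proof -
    have "(mobius_step P ^^ card P) (\<lambda>_ _. 0) a c = M a c" if "c \<in> P" "c < b" for c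
      unfolding M_def using height_in_less[OF P that] height_in_le_card[OF P, of b]
      by (intro mobius_step_iterate_stable[OF P]) auto
    then have "mobius_step P ((mobius_step P ^^ card P) (\<lambda>_ _. 0)) a b = mobius_step P M a b"
      by (rule mobius_step_cong)
    then show ?thesis
      by (simp add: M_def)
  qed
  have unique: "mu = M" if mu: "\<And>a b. mu a b = mobius_step P mu a b" for mu
  proof (intro ext)
    fix a b
    show "mu a b = M a b"
    proof (induction b rule: measure_induct_rule[where f = "height_in P"])
      case (less b)
      then have "mobius_step P mu a b = mobius_step P M a b"
        using height_in_less[OF P] by (intro mobius_step_cong) auto
      then show ?case
        using mu M by metis
    qed
  qed
  have "mobius P (\<le>) = (THE mu. \<forall>a b. mu a b = mobius_step P mu a b)"
    unfolding mobius_def mobius_step_def ..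
  also have "\<dots> = M"
  proof (rule the_equality)
    show "\<forall>a b. M a b = mobius_step P M a b"
      using M by blast
  next
    fix mu assume "\<forall>a b. mu a b = mobius_step P mu a b"
    then show "mu = M"
      using unique by blast
  qed
  finally show ?thesis
    using M by simp
qed

lemma mobius_least_eqI:
  fixes P :: "'a::order set"
  assumes P: "finite P" and least: "z \<in> P" "\<And>X. X \<in> P \<Longrightarrow> z \<le> X"
    and sum_below: "\<And>X. X \<in> P \<Longrightarrow> (\<Sum>C\<in>{C \<in> P. C \<le> X}. f C) = (if X = z then 1 else 0)"
    and X: "X \<in> P"
  shows "mobius P (\<le>) z X = f X"
  using X
proof (induction X rule: measure_induct_rule[where f = "height_in P"])
  case (less X)
  note rec = mobius_eq_mobius_step[OF P, of z X]
  show ?case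
  proof (cases "X = z")
    case True
    then have "{C \<in> P. C \<le> X} = {X}"
      using least less.prems by (auto intro: order.antisym)
    then show ?thesis
      using rec sum_below[OF less.prems] True least(1) by (simp add: mobius_step_def)
  next
    case False
    have below: "{c \<in> P. z \<le> c \<and> c \<le> X \<and> c \<noteq> X} = {C \<in> P. C \<le> X} - {X}"
      using least by blast
    have "(\<Sum>c\<in>{C \<in> P. C \<le> X} - {X}. mobius P (\<le>) z c) = (\<Sum>c\<in>{C \<in> P. C \<le> X} - {X}. f c)"
      using less.IH height_in_less[OF P] by (intro sum.cong) (auto simp: order.strict_iff_order)
    also have "\<dots> = - f X"
      using sum_below[OF less.prems] False less.prems P by (simp add: sum_diff1)
    finally show ?thesis
      using rec False least less.prems below by (simp add: mobius_step_def)
  qed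
qed

section \<open>Counting strings and the Moebius function of the arrangements\<close>

definition letters :: "bool \<Rightarrow> nat \<Rightarrow> int set" where
  "letters B d = {a. admissible B d a}"

lemma letters_eq: "letters B d = insert (int d + 1) (if B then {- int d .. int d} else {1 .. int d})"
  unfolding letters_def admissible_def by (cases B) auto

lemma canon_strs_0: "canon_strs B 0 = {[]}"
  by (auto simp: canon_strs_def canonical_Nil)

lemma canon_strs_Suc:
  "canon_strs B (Suc m) = (\<lambda>(c, a). c @ [a]) ` (SIGMA c:canon_strs B m. letters B (nblocks c))"
proof (intro equalityI subsetI)
  fix x assume "x \<in> canon_strs B (Suc m)"
  then have x: "canonical B x" "length x = Suc m"
    by (auto simp: canon_strs_def)
  then obtain c a where "x = c @ [a]"
    by (metis length_Suc_conv_rev)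
  then show "x \<in> (\<lambda>(c, a). c @ [a]) ` (SIGMA c:canon_strs B m. letters B (nblocks c))"
    using x by (auto simp: canonical_snoc_iff canon_strs_def letters_def)
qed (auto simp: canon_strs_def letters_def intro: canonical_snoc)

lemma finite_canon_strs: "finite (canon_strs B m)"
  by (induction m) (auto simp: canon_strs_0 canon_strs_Suc letters_eq)

lemma sum_canon_strs_Suc:
  "(\<Sum>c\<in>canon_strs B (Suc m). F c) = (\<Sum>c\<in>canon_strs B m. \<Sum>a\<in>letters B (nblocks c). F (c @ [a]))"
proof -
  have "inj_on (\<lambda>(c, a). c @ [a]) (SIGMA c:canon_strs B m. letters B (nblocks c))"
    by (auto simp: inj_on_def)
  then have "(\<Sum>c\<in>canon_strs B (Suc m). F c) = (\<Sum>(c, a)\<in>(SIGMA c:canon_strs B m. letters B (nblocks c)). F (c @ [a]))"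
    unfolding canon_strs_Suc by (subst sum.reindex) (auto simp: case_prod_unfold)
  also have "\<dots> = (\<Sum>c\<in>canon_strs B m. \<Sum>a\<in>letters B (nblocks c). F (c @ [a]))"
    by (rule sum.Sigma[symmetric]) (auto simp: finite_canon_strs letters_eq)
  finally show ?thesis .
qed

definition n_old_letters :: "bool \<Rightarrow> nat \<Rightarrow> nat" where
  "n_old_letters B d = (if B then 2 * d + 1 else d)"

lemma sum_canon_strs_Suc_nblocks:
  fixes G :: "nat \<Rightarrow> 'a::comm_ring_1"
  shows "(\<Sum>c\<in>canon_strs B (Suc m). G (nblocks c))
    = (\<Sum>c\<in>canon_strs B m. of_nat (n_old_letters B (nblocks c)) * G (nblocks c) + G (Suc (nblocks c)))"
proof -
  have "(\<Sum>a\<in>letters B d. G (max d (nat \<bar>a\<bar>))) = of_nat (n_old_letters B d) * G d + G (Suc d)" for d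
  proof -
    let ?old = "if B then {- int d .. int d} else {1 .. int d}"
    have "(\<Sum>a\<in>letters B d. G (max d (nat \<bar>a\<bar>))) = G (Suc d) + (\<Sum>a\<in>?old. G (max d (nat \<bar>a\<bar>)))"
      unfolding letters_eq by (subst sum.insert) (auto simp: max_def)
    also have "(\<Sum>a\<in>?old. G (max d (nat \<bar>a\<bar>))) = (\<Sum>a\<in>?old. G d)"
      by (rule sum.cong) (auto split: if_splits)
    also have "\<dots> = of_nat (n_old_letters B d) * G d"
      by (simp add: n_old_letters_def add.commute)
    finally show ?thesis
      by (simp add: add.commute)
  qed
  then show ?thesis
    by (simp add: sum_canon_strs_Suc)
qed

lemma nblocks_le: "c \<in> canon_strs B m \<Longrightarrow> nblocks c \<le> m"
  using nblocks_le_length by (auto simp: canon_strs_def)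

lemma nblocks_typeA_pos: "c \<in> canon_strs False m \<Longrightarrow> 1 \<le> m \<Longrightarrow> 1 \<le> nblocks c"
  using canonical_typeA_ge_1[of c 0] nblocks_ge_nth[of 0 c] by (auto simp: canon_strs_def)

fun odd_fact :: "nat \<Rightarrow> nat" where
  "odd_fact 0 = 1"
| "odd_fact (Suc d) = (2 * d + 1) * odd_fact d"

lemma odd_fact_pos: "odd_fact d > 0"
  by (induction d) auto

text \<open>Here \<open>odd_fact d = (2d - 1)!!\<close>; in type A, truncated subtraction yields the correct
  value \<open>1\<close> at \<open>d = 0\<close>, the dimension of the only flat of \<open>A\<^sub>0\<close>.\<close>

definition mobius_value :: "bool \<Rightarrow> nat \<Rightarrow> int" where
  "mobius_value B d =
    (if B then (-1) ^ d * int (odd_fact d) else (-1) ^ (d - 1) * int (fact (d - 1)))"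

lemma mobius_value_nonzero: "mobius_value B d \<noteq> 0"
  using odd_fact_pos[of d] by (auto simp: mobius_value_def)

lemma sum_mobius_value: "(\<Sum>c\<in>canon_strs B m. mobius_value B (nblocks c)) = of_bool (arr B m = {})"
proof (cases m)
  case 0
  then show ?thesis
    by (simp add: canon_strs_0 mobius_value_def arr_empty_iff)
next
  case (Suc m')
  have step: "of_nat (n_old_letters B d) * mobius_value B d + mobius_value B (Suc d)
      = (if B then 0 else of_bool (d = 0))" for d
    by (cases B; cases d) (simp_all add: n_old_letters_def mobius_value_def algebra_simps)
  have "(\<Sum>c\<in>canon_strs B m. mobius_value B (nblocks c))
      = (\<Sum>c\<in>canon_strs B m'. if B then 0 else of_bool (nblocks c = 0))"
    unfolding Suc sum_canon_strs_Suc_nblocks step ..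
  also have "\<dots> = of_bool (arr B m = {})"
  proof (cases "\<not> B \<and> m' = 0")
    case False
    then have "(\<Sum>c\<in>canon_strs B m'. if B then 0 else of_bool (nblocks c = 0)) = (0::int)"
    proof (intro sum.neutral ballI)
      fix c assume "c \<in> canon_strs B m'"
      then show "(if B then 0 else of_bool (nblocks c = 0)) = (0::int)"
        using False nblocks_typeA_pos[of c m'] by (cases B) auto
    qed
    then show ?thesis
      using False Suc by (auto simp: arr_empty_iff)
  qed (simp add: canon_strs_0 arr_empty_iff Suc)
  finally show ?thesis .
qed

lemma sum_arr_flats_dim:
  "(\<Sum>X\<in>arr_flats B m. g (pt.dim X)) = (\<Sum>c\<in>canon_strs B m. g (nblocks c))"
  unfolding arr_flats_eq_str_flats sum.reindex[OF inj_on_str_flat] comp_def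
  by (rule sum.cong) (auto simp: canon_strs_def dim_str_flat)

lemma finite_arr_flats: "finite (arr_flats B m)"
  unfolding arr_flats_eq_str_flats by (rule finite_imageI[OF finite_canon_strs])

lemma flat_bot_in_arr_flats: "flat_bot m (arr B m) \<in> arr_flats B m"
  unfolding flat_bot_def flats_def by blast

lemma flat_bot_subset: "C \<in> arr_flats B m \<Longrightarrow> flat_bot m (arr B m) \<subseteq> C"
  unfolding flat_bot_def flats_def by blast

lemma arr_flats_subset_ambient: "C \<in> arr_flats B m \<Longrightarrow> C \<subseteq> ambient m"
  unfolding flats_def by blast

lemma sum_mobius_value_below:
  assumes X: "X \<in> arr_flats B m"
  shows "(\<Sum>C\<in>{C \<in> arr_flats B m. C \<subseteq> X}. mobius_value B (pt.dim C)) = of_bool (arr B (pt.dim X) = {})"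
proof -
  obtain c where c: "canonical B c" "length c = m" "X = str_flat c"
    using X unfolding arr_flats_eq_str_flats canon_strs_def by blast
  let ?d = "nblocks c"
  have inj: "inj_on (\<lambda>C'. str_map c ` C') (arr_flats B ?d)"
    using inj_on_image_eq_iff[OF inj_on_str_map[OF c(1)] arr_flats_subset_ambient arr_flats_subset_ambient]
    by (auto simp: inj_on_def)
  have "(\<Sum>C\<in>{C \<in> arr_flats B m. C \<subseteq> X}. mobius_value B (pt.dim C))
      = (\<Sum>C'\<in>arr_flats B ?d. mobius_value B (pt.dim (str_map c ` C')))"
    using flats_below_str_flat[OF c(1)] c(2,3) by (simp add: sum.reindex[OF inj])
  also have "\<dots> = (\<Sum>C'\<in>arr_flats B ?d. mobius_value B (pt.dim C'))"
    by (rule sum.cong[OF refl]) (simp add: dim_str_map_image[OF c(1) arr_flats_subset_ambient])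
  also have "\<dots> = (\<Sum>c'\<in>canon_strs B ?d. mobius_value B (nblocks c'))"
    by (rule sum_arr_flats_dim)
  also have "\<dots> = of_bool (arr B ?d = {})"
    by (rule sum_mobius_value)
  finally show ?thesis
    using c dim_str_flat by metis
qed

lemma flat_bot_if_arr_empty:
  assumes X: "X \<in> arr_flats B m" and empty: "arr B (pt.dim X) = {}"
  shows "X = flat_bot m (arr B m)"
proof -
  obtain c where c: "canonical B c" "length c = m" "X = str_flat c"
    using X unfolding arr_flats_eq_str_flats canon_strs_def by blast
  then have "arr B (nblocks c) = {}"
    using empty dim_str_flat by metis
  then have "pullback c H = ambient (nblocks c)" if "H \<in> arr B m" for H
    using pullback_hyperplane[OF c(1)] that c(2) by auto
  then have "X \<subseteq> flat_bot m (arr B m)"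
    using arr_flats_subset_ambient[OF X] unfolding c(3) str_flat_def pullback_def flat_bot_def by blast
  then show ?thesis
    using flat_bot_subset[OF X] by blast
qed

lemma mobius_arr_flats:
  assumes "X \<in> arr_flats B m"
  shows "mobius (arr_flats B m) (\<subseteq>) (flat_bot m (arr B m)) X = mobius_value B (pt.dim X)"
proof (rule mobius_least_eqI[OF finite_arr_flats flat_bot_in_arr_flats flat_bot_subset _ assms])
  fix X assume X: "X \<in> arr_flats B m"
  show "(\<Sum>C\<in>{C \<in> arr_flats B m. C \<subseteq> X}. mobius_value B (pt.dim C)) = (if X = flat_bot m (arr B m) then 1 else 0)"
  proof (cases "X = flat_bot m (arr B m)")
    case True
    then have "{C \<in> arr_flats B m. C \<subseteq> X} = {X}"
      using flat_bot_subset X by blast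
    then have "mobius_value B (pt.dim X) = of_bool (arr B (pt.dim X) = {})"
      using sum_mobius_value_below[OF X] by simp
    moreover have "arr B (pt.dim X) = {}"
      using calculation mobius_value_nonzero[of B "pt.dim X"] by (cases "arr B (pt.dim X) = {}") simp_all
    ultimately show ?thesis
      using True sum_mobius_value_below[OF X] by simp
  next
    case False
    then have "arr B (pt.dim X) \<noteq> {}"
      using flat_bot_if_arr_empty[OF X] by blast
    then show ?thesis
      using sum_mobius_value_below[OF X] False by simp
  qed
qed

lemma arr_poly_eq_sum_canon_strs:
  "arr_poly m (arr B m)
    = (\<Sum>c\<in>canon_strs B m. smult (real_of_int \<bar>mobius_value B (nblocks c)\<bar>) ([:-1, 1:] ^ (m - nblocks c)))"
proof -
  have "arr_poly m (arr B m)
      = (\<Sum>X\<in>arr_flats B m. smult (real_of_int \<bar>mobius_value B (pt.dim X)\<bar>) ([:-1, 1:] ^ (m - pt.dim X)))"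
    unfolding arr_poly_def codim_def by (intro sum.cong refl) (simp only: mobius_arr_flats)
  also have "\<dots> = (\<Sum>c\<in>canon_strs B m. smult (real_of_int \<bar>mobius_value B (nblocks c)\<bar>) ([:-1, 1:] ^ (m - nblocks c)))"
    by (rule sum_arr_flats_dim)
  finally show ?thesis .
qed

section \<open>Recurrences for the polynomials\<close>

abbreviation poly_B :: "nat \<Rightarrow> real poly" where
  "poly_B m \<equiv> arr_poly m (typeB_arr m)"

abbreviation poly_A :: "nat \<Rightarrow> real poly" where
  "poly_A m \<equiv> arr_poly m (braid_arr m)"

definition z_minus_1 :: "real poly" where
  "z_minus_1 = [:-1, 1:]"

lemma pderiv_sum: "pderiv (sum f A) = (\<Sum>x\<in>A. pderiv (f x))"
  by (induction A rule: infinite_finite_induct) (auto simp: pderiv_add)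

lemma pderiv_of_nat_mult: "pderiv (of_nat c * p) = of_nat c * pderiv p"
  by (simp add: pderiv_mult)

lemma z_minus_1_mult_pderiv_power: "z_minus_1 * pderiv (z_minus_1 ^ k) = of_nat k * z_minus_1 ^ k"
proof (cases k)
  case (Suc k')
  have "pderiv z_minus_1 = 1"
    by (simp add: z_minus_1_def pderiv_pCons)
  then have "pderiv (z_minus_1 ^ Suc k') = smult (of_nat (Suc k')) (z_minus_1 ^ k')"
    by (simp only: pderiv_power_Suc mult_1_right)
  then show ?thesis
    unfolding Suc by (simp only: mult_smult_right of_nat_mult_conv_smult power_Suc)
qed simp

definition typeB_term :: "nat \<Rightarrow> nat \<Rightarrow> real poly" where
  "typeB_term m d = of_nat (odd_fact d) * z_minus_1 ^ (m - d)"

definition typeA_term :: "nat \<Rightarrow> nat \<Rightarrow> real poly" where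
  "typeA_term m d = of_nat (fact (d - 1)) * z_minus_1 ^ (m - d)"

lemma poly_B_eq_sum: "poly_B m = (\<Sum>c\<in>canon_strs True m. typeB_term m (nblocks c))"
  using arr_poly_eq_sum_canon_strs[of m True, folded z_minus_1_def]
  by (simp add: arr_def typeB_term_def mobius_value_def abs_mult of_nat_mult_conv_smult)

lemma poly_A_eq_sum: "poly_A m = (\<Sum>c\<in>canon_strs False m. typeA_term m (nblocks c))"
  using arr_poly_eq_sum_canon_strs[of m False, folded z_minus_1_def]
  by (simp add: arr_def typeA_term_def mobius_value_def abs_mult of_nat_mult_conv_smult del: of_nat_fact)

lemma typeB_term_Suc:
  assumes "d \<le> m"
  shows "of_nat (n_old_letters True d) * typeB_term (Suc m) d + typeB_term (Suc m) (Suc d)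
    = (z_minus_1 + 1) * (of_nat (2 * d + 1) * typeB_term m d)"
proof -
  have "Suc m - d = Suc (m - d)"
    using assms by simp
  then show ?thesis
    unfolding typeB_term_def n_old_letters_def by (simp add: algebra_simps)
qed

lemma typeB_term_euler:
  assumes "d \<le> m"
  shows "of_nat (2 * m + 1) * typeB_term m d - 2 * (z_minus_1 * pderiv (typeB_term m d))
    = of_nat (2 * d + 1) * typeB_term m d"
proof -
  have "z_minus_1 * pderiv (typeB_term m d) = of_nat (odd_fact d) * (of_nat (m - d) * z_minus_1 ^ (m - d))"
    unfolding typeB_term_def pderiv_of_nat_mult by (simp add: z_minus_1_mult_pderiv_power[symmetric] algebra_simps)
  moreover have "(of_nat (2 * m + 1) :: real poly) = of_nat (2 * d + 1) + 2 * of_nat (m - d)"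
    using assms by (simp add: of_nat_diff)
  ultimately show ?thesis
    unfolding typeB_term_def by (simp add: algebra_simps)
qed

lemma typeA_term_Suc:
  assumes "1 \<le> d" "d \<le> m"
  shows "of_nat (n_old_letters False d) * typeA_term (Suc m) d + typeA_term (Suc m) (Suc d)
    = (z_minus_1 + 1) * (of_nat d * typeA_term m d)"
proof -
  have "Suc m - d = Suc (m - d)" "Suc m - Suc d = m - d"
    using assms by simp_all
  moreover have "fact (Suc d - 1) = d * fact (d - 1)"
    using assms by (simp add: fact_reduce)
  ultimately show ?thesis
    unfolding typeA_term_def n_old_letters_def of_nat_mult power_Suc
    by (simp add: algebra_simps del: of_nat_fact)
qed

lemma typeA_term_euler:
  assumes "d \<le> m"
  shows "of_nat m * typeA_term m d - z_minus_1 * pderiv (typeA_term m d) = of_nat d * typeA_term m d"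
proof -
  have "z_minus_1 * pderiv (typeA_term m d) = of_nat (fact (d - 1)) * (of_nat (m - d) * z_minus_1 ^ (m - d))"
    unfolding typeA_term_def pderiv_of_nat_mult
    by (simp add: z_minus_1_mult_pderiv_power[symmetric] algebra_simps del: of_nat_fact)
  moreover have "(of_nat m :: real poly) = of_nat d + of_nat (m - d)"
    using assms by (simp add: of_nat_diff)
  ultimately show ?thesis
    unfolding typeA_term_def by (simp add: algebra_simps del: of_nat_fact)
qed

lemma poly_B_Suc:
  "poly_B (Suc m) = (z_minus_1 + 1) * (of_nat (2 * m + 1) * poly_B m - 2 * (z_minus_1 * pderiv (poly_B m)))"
proof -
  have "poly_B (Suc m) = (\<Sum>c\<in>canon_strs True m. (z_minus_1 + 1) * (of_nat (2 * nblocks c + 1) * typeB_term m (nblocks c)))"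
    unfolding poly_B_eq_sum sum_canon_strs_Suc_nblocks by (intro sum.cong refl typeB_term_Suc nblocks_le)
  also have "\<dots> = (\<Sum>c\<in>canon_strs True m. (z_minus_1 + 1) *
      (of_nat (2 * m + 1) * typeB_term m (nblocks c) - 2 * (z_minus_1 * pderiv (typeB_term m (nblocks c)))))"
    by (intro sum.cong refl arg_cong[where f = "(*) _"] typeB_term_euler[symmetric] nblocks_le)
  also have "\<dots> = (z_minus_1 + 1) * (\<Sum>c\<in>canon_strs True m.
      of_nat (2 * m + 1) * typeB_term m (nblocks c) - 2 * (z_minus_1 * pderiv (typeB_term m (nblocks c))))"
    by (simp only: sum_distrib_left)
  also have "\<dots> = (z_minus_1 + 1) * (of_nat (2 * m + 1) * poly_B m - 2 * (z_minus_1 * pderiv (poly_B m)))"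
    unfolding poly_B_eq_sum pderiv_sum sum_distrib_left sum_subtractf ..
  finally show ?thesis .
qed

lemma poly_A_Suc:
  assumes "1 \<le> m"
  shows "poly_A (Suc m) = (z_minus_1 + 1) * (of_nat m * poly_A m - z_minus_1 * pderiv (poly_A m))"
proof -
  have "poly_A (Suc m) = (\<Sum>c\<in>canon_strs False m. (z_minus_1 + 1) * (of_nat (nblocks c) * typeA_term m (nblocks c)))"
    unfolding poly_A_eq_sum sum_canon_strs_Suc_nblocks
    by (intro sum.cong refl typeA_term_Suc nblocks_le nblocks_typeA_pos[OF _ assms])
  also have "\<dots> = (\<Sum>c\<in>canon_strs False m. (z_minus_1 + 1) *
      (of_nat m * typeA_term m (nblocks c) - z_minus_1 * pderiv (typeA_term m (nblocks c))))"
    by (intro sum.cong refl arg_cong[where f = "(*) _"] typeA_term_euler[symmetric] nblocks_le)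
  also have "\<dots> = (z_minus_1 + 1) * (\<Sum>c\<in>canon_strs False m.
      of_nat m * typeA_term m (nblocks c) - z_minus_1 * pderiv (typeA_term m (nblocks c)))"
    by (simp only: sum_distrib_left)
  also have "\<dots> = (z_minus_1 + 1) * (of_nat m * poly_A m - z_minus_1 * pderiv (poly_A m))"
    unfolding poly_A_eq_sum pderiv_sum sum_distrib_left sum_subtractf ..
  finally show ?thesis .
qed

lemma poly_B_0: "poly_B 0 = 1"
  by (simp add: poly_B_eq_sum canon_strs_0 typeB_term_def)

lemma poly_A_1: "poly_A 1 = 1"
proof -
  have "canon_strs False 1 = {[1]}"
    unfolding One_nat_def canon_strs_Suc canon_strs_0 letters_eq by (auto intro!: image_eqI[of _ _ "([], 1)"])
  then show ?thesis
    by (simp add: poly_A_eq_sum typeA_term_def nblocks_def)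
qed

section \<open>The convolution identity\<close>

lemma sum_binomial_convolution_Suc:
  fixes X Y :: "nat \<Rightarrow> 'a::comm_ring_1"
  shows "(\<Sum>k\<le>Suc n. of_nat (Suc n choose k) * (X k * Y (Suc n - k)))
       = (\<Sum>k\<le>n. of_nat (n choose k) * (X (Suc k) * Y (n - k) + X k * Y (Suc (n - k))))"
proof -
  let ?S1 = "\<Sum>k\<le>n. of_nat (n choose k) * (X (Suc k) * Y (n - k))"
  let ?S2 = "\<Sum>k\<le>n. of_nat (n choose Suc k) * (X (Suc k) * Y (n - k))"
  have "(\<Sum>k\<le>Suc n. of_nat (Suc n choose k) * (X k * Y (Suc n - k))) = X 0 * Y (Suc n) + ?S1 + ?S2"
    by (subst sum.atMost_Suc_shift) (simp add: sum.distrib algebra_simps)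
  moreover have "X 0 * Y (Suc n) + ?S2 = (\<Sum>k\<le>Suc n. of_nat (n choose k) * (X k * Y (Suc n - k)))"
    by (subst sum.atMost_Suc_shift) simp
  moreover have "\<dots> = (\<Sum>k\<le>n. of_nat (n choose k) * (X k * Y (Suc (n - k))))"
    by (simp add: Suc_diff_le binomial_eq_0)
  ultimately have "(\<Sum>k\<le>Suc n. of_nat (Suc n choose k) * (X k * Y (Suc n - k)))
      = ?S1 + (\<Sum>k\<le>n. of_nat (n choose k) * (X k * Y (Suc (n - k))))"
    by (simp add: algebra_simps)
  then show ?thesis
    by (simp add: sum.distrib distrib_left)
qed

definition typeB_convolution :: "nat \<Rightarrow> real poly" where
  "typeB_convolution n = (\<Sum>k\<le>n. of_nat (n choose k) * (poly_B k * poly_B (n - k)))"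

lemma poly_B_product_Suc:
  assumes "k \<le> n"
  shows "poly_B (Suc k) * poly_B (n - k) + poly_B k * poly_B (Suc (n - k))
    = (z_minus_1 + 1) * (of_nat (2 * n + 2) * (poly_B k * poly_B (n - k))
        - 2 * (z_minus_1 * pderiv (poly_B k * poly_B (n - k))))"
proof -
  have "(of_nat (2 * n + 2) :: real poly) = of_nat (2 * k + 1) + of_nat (2 * (n - k) + 1)"
    using assms by (simp add: of_nat_diff)
  then show ?thesis
    unfolding poly_B_Suc[of k] poly_B_Suc[of "n - k"] pderiv_mult by (simp add: algebra_simps)
qed

lemma typeB_convolution_Suc:
  "typeB_convolution (Suc n)
    = (z_minus_1 + 1) * (of_nat (2 * n + 2) * typeB_convolution n - 2 * (z_minus_1 * pderiv (typeB_convolution n)))"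
proof -
  have "typeB_convolution (Suc n)
      = (\<Sum>k\<le>n. of_nat (n choose k) * (poly_B (Suc k) * poly_B (n - k) + poly_B k * poly_B (Suc (n - k))))"
    unfolding typeB_convolution_def
    by (rule sum_binomial_convolution_Suc[where X = "\<lambda>k. poly_B k" and Y = "\<lambda>k. poly_B k"])
  also have "\<dots> = (\<Sum>k\<le>n. of_nat (n choose k) * ((z_minus_1 + 1) * (of_nat (2 * n + 2) * (poly_B k * poly_B (n - k))
          - 2 * (z_minus_1 * pderiv (poly_B k * poly_B (n - k))))))"
    by (intro sum.cong refl arg_cong[where f = "(*) _"] poly_B_product_Suc) simp
  also have "\<dots> = (z_minus_1 + 1) * (of_nat (2 * n + 2) * typeB_convolution n
      - 2 * (z_minus_1 * pderiv (typeB_convolution n)))"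
    unfolding typeB_convolution_def pderiv_sum pderiv_of_nat_mult
    by (simp add: sum_distrib_left sum_subtractf algebra_simps)
  finally show ?thesis .
qed

lemma typeB_convolution_eq: "typeB_convolution n = of_nat (2 ^ n) * poly_A (Suc n)"
proof (induction n)
  case 0
  then show ?case
    using poly_A_1 by (simp add: typeB_convolution_def poly_B_0)
next
  case (Suc n)
  have "typeB_convolution (Suc n) = of_nat (2 ^ Suc n) *
      ((z_minus_1 + 1) * (of_nat (Suc n) * poly_A (Suc n) - z_minus_1 * pderiv (poly_A (Suc n))))"
    unfolding typeB_convolution_Suc Suc pderiv_of_nat_mult by (simp add: algebra_simps)
  also have "\<dots> = of_nat (2 ^ Suc n) * poly_A (Suc (Suc n))"
    by (subst poly_A_Suc) auto
  finally show ?case .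
qed

theorem proposition6p11:
  fixes n :: nat
  shows "(\<Sum>k\<le>n. smult (real (n choose k)) (arr_poly k (typeB_arr k) * arr_poly (n - k) (typeB_arr (n - k))))
         = smult (2 ^ n) (arr_poly (n + 1) (braid_arr (n + 1)))"
proof -
  have "(\<Sum>k\<le>n. smult (real (n choose k)) (poly_B k * poly_B (n - k))) = typeB_convolution n"
    by (simp add: typeB_convolution_def of_nat_mult_conv_smult)
  also have "\<dots> = smult (2 ^ n) (poly_A (n + 1))"
    unfolding typeB_convolution_eq of_nat_mult_conv_smult by simp
  finally show ?thesis .
qed

end
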